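(* Let $R$ be a ring with prime subring $P$ (the subring generated by $1$). Let $M$ be a submonoid of the unit group $U(R)$ and let $C$ be a subring of $R$. Suppose that: (1) the subring generated by $P$ and $M$ is the monoid ring $P[M]$ (i.e. the natural map $P[M]\to R$ is injective); (2) for each $c\in C$ and $f\in P[M]$, $cf=0$ implies $c=0$ or $f=0$; (3) every element of $M$ commutes with every element of $C$; (4) $M$ is an orderable monoid, i.e. it admits a total order $<$ such that $x<y$ implies $zx<zy$ and $xz<yz$ for all $x,y,z\in M$; (5) $M$ embeds in some group $H$ such that the subgroup of $H$ generated by $M$ has trivial center. Then the subring of $R$ generated by $C$ and $M$ is the monoid ring $C[M]$ (i.e. the natural map $C[M]\to R$ is injective). *)

theory Defs
  imports "HOL-Algebra.Generated_Groups"
begin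

(* unital subring of a ring R (R modelled by a type of class ring_1) *)
definition is_subring :: "'a::ring_1 set \<Rightarrow> bool" where
  "is_subring C \<longleftrightarrow> 1 \<in> C \<and> (\<forall>x\<in>C. \<forall>y\<in>C. x - y \<in> C \<and> x * y \<in> C)"

definition units_of_ring :: "'a::ring_1 set" where
  "units_of_ring = {x. \<exists>y. x * y = 1 \<and> y * x = 1}"

definition is_submonoid :: "'a::ring_1 set \<Rightarrow> bool" where
  "is_submonoid M \<longleftrightarrow> 1 \<in> M \<and> (\<forall>x\<in>M. \<forall>y\<in>M. x * y \<in> M)"

(* prime subring P = subring generated by 1 = image of the integers *)
definition prime_subring :: "'a::ring_1 set" where
  "prime_subring = range of_int"

(* the natural map A[M] -> R (A a subset of R, M a subset of R) is injective:
   a finitely supported family of coefficients in A indexed by M whose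
   image  sum_m c_m m  vanishes is zero *)
definition monoid_ring_injective :: "'a::ring_1 set \<Rightarrow> 'a set \<Rightarrow> bool" where
  "monoid_ring_injective A M \<longleftrightarrow>
     (\<forall>S c. finite S \<longrightarrow> S \<subseteq> M \<longrightarrow> c ` S \<subseteq> A \<longrightarrow>
        (\<Sum>m\<in>S. c m * m) = 0 \<longrightarrow> (\<forall>m\<in>S. c m = 0))"

definition monoid_ring_image :: "'a::ring_1 set \<Rightarrow> 'a set \<Rightarrow> 'a set" where
  "monoid_ring_image A M =
     {x. \<exists>S c. finite S \<and> S \<subseteq> M \<and> c ` S \<subseteq> A \<and> x = (\<Sum>m\<in>S. c m * m)}"

definition orderable_monoid :: "'a::ring_1 set \<Rightarrow> bool" where
  "orderable_monoid M \<longleftrightarrow> (\<exists>lt :: 'a \<Rightarrow> 'a \<Rightarrow> bool.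
     (\<forall>x\<in>M. \<not> lt x x) \<and>
     (\<forall>x\<in>M. \<forall>y\<in>M. \<forall>z\<in>M. lt x y \<longrightarrow> lt y z \<longrightarrow> lt x z) \<and>
     (\<forall>x\<in>M. \<forall>y\<in>M. x \<noteq> y \<longrightarrow> lt x y \<or> lt y x) \<and>
     (\<forall>x\<in>M. \<forall>y\<in>M. \<forall>z\<in>M. lt x y \<longrightarrow> lt (z * x) (z * y) \<and> lt (x * z) (y * z)))"

definition monoid_embedding :: "'a::ring_1 set \<Rightarrow> ('h, 'b) monoid_scheme \<Rightarrow> ('a \<Rightarrow> 'h) \<Rightarrow> bool" where
  "monoid_embedding M H \<phi> \<longleftrightarrow> inj_on \<phi> M \<and> \<phi> ` M \<subseteq> carrier H \<and> \<phi> 1 = \<one>\<^bsub>H\<^esub> \<and>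
     (\<forall>x\<in>M. \<forall>y\<in>M. \<phi> (x * y) = \<phi> x \<otimes>\<^bsub>H\<^esub> \<phi> y)"

definition trivial_center :: "('h, 'b) monoid_scheme \<Rightarrow> 'h set \<Rightarrow> bool" where
  "trivial_center H K \<longleftrightarrow> {z \<in> K. \<forall>g\<in>K. z \<otimes>\<^bsub>H\<^esub> g = g \<otimes>\<^bsub>H\<^esub> z} = {\<one>\<^bsub>H\<^esub>}"

end

theory Submission
  imports Defs
begin

(* Proof idea (a Passman-style leading term argument).  Call a family c_i \<in> C,
   f_i \<in> P[M] (i \<in> I) with \<Sum> c_i f_i = 0 in R a linear relation; it is formally trivial
   if \<Sum> c_i \<otimes> f_i = 0 in C[M], i.e. \<Sum>_i c_i (coefficient of x in f_i) = 0 for all x.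
   Injectivity of C[M] \<rightarrow> R is the special case of monomials f_i.  Suppose a formally
   nontrivial relation exists and take one with |I| minimal.  Then the c_i are
   P-linearly independent and no f_i vanishes (both would give shorter relations).
   For u \<in> M, \<Sum>_k c_k (f_k u f_{i0} - f_{i0} u f_k) = 0 is shorter (C commutes with M and P),
   so it is formally trivial, whence f_k u f_{i0} = f_{i0} u f_k in P[M].  Comparing top
   terms in the ordered monoid M shows that the leading terms a, b of f_{i0}, f_k satisfy
   b u a = a u b for all u, hence a = b by the group hypothesis ("twist rigidity").  A
   Gaussian elimination step with the leading coefficients then produces a minimal
   relation in which some f_i has a strictly smaller leading term: contradiction. *)

lemma (in group) centralizer_subgroup:
  assumes z: "z \<in> carrier G"
  shows "subgroup {g \<in> carrier G. z \<otimes> g = g \<otimes> z} G"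
proof (rule subgroupI)
  fix g assume "g \<in> {g \<in> carrier G. z \<otimes> g = g \<otimes> z}"
  then have g: "g \<in> carrier G" and zg: "z \<otimes> g = g \<otimes> z" by auto
  have "z \<otimes> inv g = inv g \<otimes> (g \<otimes> z) \<otimes> inv g" using g z by (simp flip: m_assoc)
  also have "\<dots> = inv g \<otimes> (z \<otimes> g) \<otimes> inv g" using zg by simp
  also have "\<dots> = inv g \<otimes> z" using g z by (simp add: m_assoc)
  finally show "inv g \<in> {g \<in> carrier G. z \<otimes> g = g \<otimes> z}" using g by simp
next
  fix g h assume "g \<in> {g \<in> carrier G. z \<otimes> g = g \<otimes> z}" "h \<in> {g \<in> carrier G. z \<otimes> g = g \<otimes> z}"
  then show "g \<otimes> h \<in> {g \<in> carrier G. z \<otimes> g = g \<otimes> z}"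
    using z by (auto simp flip: m_assoc) (simp add: m_assoc)
qed (use z in auto)

lemma (in group) commutes_with_generate:
  assumes S: "S \<subseteq> carrier G" and z: "z \<in> carrier G" and comm: "\<And>s. s \<in> S \<Longrightarrow> z \<otimes> s = s \<otimes> z"
    and g: "g \<in> generate G S"
  shows "z \<otimes> g = g \<otimes> z"
  using generate_subgroup_incl[OF _ centralizer_subgroup[OF z], of S] S comm g by auto

(* the only consequence of the group hypothesis (5) that the proof uses *)
definition twist_rigid :: "'a::ring_1 set \<Rightarrow> bool" where
  "twist_rigid M \<longleftrightarrow> (\<forall>a\<in>M. \<forall>b\<in>M. (\<forall>u\<in>M. b * u * a = a * u * b) \<longrightarrow> a = b)"

(* if (\<forall>u. b u a = a u b) then z = \<phi>(a)\<inverse>\<phi>(b) is central in the subgroup generated by \<phi> ` M *)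
lemma twist_rigid_if_embedded:
  fixes M :: "'a::ring_1 set" and H :: "'h monoid" (structure) and \<phi> :: "'a \<Rightarrow> 'h"
  assumes "group H" and emb: "monoid_embedding M H \<phi>"
    and centre: "trivial_center H (generate H (\<phi> ` M))" and "is_submonoid M"
  shows "twist_rigid M"
  unfolding twist_rigid_def
proof (intro ballI impI)
  interpret group H by fact
  have inj: "inj_on \<phi> M" and img: "\<phi> ` M \<subseteq> carrier H" and hom_one: "\<phi> 1 = \<one>"
    and hom_mult: "\<And>x y. x \<in> M \<Longrightarrow> y \<in> M \<Longrightarrow> \<phi> (x * y) = \<phi> x \<otimes> \<phi> y"
    using emb unfolding monoid_embedding_def by auto
  have one_M: "1 \<in> M" and mult_M: "\<And>x y. x \<in> M \<Longrightarrow> y \<in> M \<Longrightarrow> x * y \<in> M"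
    using \<open>is_submonoid M\<close> unfolding is_submonoid_def by auto
  fix a b assume a: "a \<in> M" and b: "b \<in> M" and twist: "\<forall>u\<in>M. b * u * a = a * u * b"
  define x y where "x = \<phi> a" and "y = \<phi> b"
  have x: "x \<in> carrier H" and y: "y \<in> carrier H" using img a b by (auto simp: x_def y_def)
  have rel: "y \<otimes> w \<otimes> x = x \<otimes> w \<otimes> y" if w: "w \<in> \<phi> ` M" for w
  proof -
    obtain u where u: "u \<in> M" and w_eq: "w = \<phi> u" using w by auto
    have "\<phi> (b * u * a) = \<phi> (a * u * b)" using twist u by simp
    then show ?thesis using a b u by (simp add: w_eq x_def y_def hom_mult mult_M)
  qed
  (* w = 1 shows that x and y commute; then z = x\<inverse>y commutes with all of \<phi> ` M *)
  have yx: "y \<otimes> x = x \<otimes> y" using rel[of \<one>] one_M hom_one x y by (metis image_eqI r_one)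
  define z where "z = inv x \<otimes> y"
  have z: "z \<in> carrier H" using x y by (simp add: z_def)
  have "z \<otimes> w = w \<otimes> z" if w: "w \<in> \<phi> ` M" for w
  proof -
    have wc: "w \<in> carrier H" using w img by auto
    have "z \<otimes> w = inv x \<otimes> (y \<otimes> w \<otimes> x) \<otimes> inv x" using x y wc by (simp add: z_def m_assoc)
    also have "\<dots> = inv x \<otimes> (x \<otimes> w \<otimes> y) \<otimes> inv x" using rel[OF w] by simp
    also have "\<dots> = w \<otimes> (y \<otimes> inv x)" using x y wc by (simp flip: m_assoc)
    also have "y \<otimes> inv x = inv x \<otimes> (x \<otimes> y) \<otimes> inv x" using x y by (simp flip: m_assoc)
    also have "\<dots> = inv x \<otimes> (y \<otimes> x) \<otimes> inv x" using yx by simp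
    also have "\<dots> = z" using x y by (simp add: z_def m_assoc)
    finally show ?thesis .
  qed
  moreover have "z \<in> generate H (\<phi> ` M)"
    unfolding z_def x_def y_def using a b by (intro generate.eng generate.inv generate.incl) auto
  ultimately have "z = \<one>"
    using centre commutes_with_generate[OF img z] unfolding trivial_center_def by blast
  moreover have "y = x \<otimes> z" using x y by (simp add: z_def flip: m_assoc)
  ultimately have "x = y" using x by simp
  then show "a = b" using inj a b by (simp add: x_def y_def inj_on_def)
qed

lemma prime_subring_of_int [simp]: "of_int n \<in> prime_subring"
  unfolding prime_subring_def by simp

lemma prime_subring_0 [simp]: "0 \<in> prime_subring"
  and prime_subring_1 [simp]: "1 \<in> prime_subring"
  using prime_subring_of_int[of 0] prime_subring_of_int[of 1] by simp_all

lemma prime_subring_diff: "p \<in> prime_subring \<Longrightarrow> q \<in> prime_subring \<Longrightarrow> p - q \<in> prime_subring"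
  and prime_subring_add: "p \<in> prime_subring \<Longrightarrow> q \<in> prime_subring \<Longrightarrow> p + q \<in> prime_subring"
  and prime_subring_mult: "p \<in> prime_subring \<Longrightarrow> q \<in> prime_subring \<Longrightarrow> p * q \<in> prime_subring"
  unfolding prime_subring_def by (auto simp flip: of_int_diff of_int_add of_int_mult)

lemma prime_subring_sum:
  "finite A \<Longrightarrow> (\<And>i. i \<in> A \<Longrightarrow> f i \<in> prime_subring) \<Longrightarrow> sum f A \<in> prime_subring"
  by (induction A rule: finite_induct) (auto intro: prime_subring_add)

lemma prime_subring_commute: "p \<in> prime_subring \<Longrightarrow> p * x = x * p"
  unfolding prime_subring_def by (auto simp: mult_of_int_commute)

lemma subring_0: "is_subring C \<Longrightarrow> 0 \<in> C"
  unfolding is_subring_def by (metis diff_self)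

lemma subring_mult: "is_subring C \<Longrightarrow> x \<in> C \<Longrightarrow> y \<in> C \<Longrightarrow> x * y \<in> C"
  unfolding is_subring_def by blast

lemma subring_add:
  assumes "is_subring C" "x \<in> C" "y \<in> C" shows "x + y \<in> C"
proof -
  have "- y \<in> C" using assms subring_0 unfolding is_subring_def by (metis diff_0)
  then show ?thesis using assms unfolding is_subring_def by (metis diff_minus_eq_add)
qed

lemma subring_sum:
  assumes "is_subring C"
  shows "finite A \<Longrightarrow> (\<And>i. i \<in> A \<Longrightarrow> f i \<in> C) \<Longrightarrow> sum f A \<in> C"
  by (induction A rule: finite_induct) (auto intro: subring_add[OF assms] subring_0[OF assms])

lemma prime_subring_subset:
  assumes C: "is_subring C" shows "prime_subring \<subseteq> C"
proof
  fix p :: 'a assume "p \<in> prime_subring"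
  then obtain n where p: "p = of_int n" unfolding prime_subring_def by auto
  have nat: "of_nat k \<in> C" for k
    by (induction k) (use C in \<open>auto simp: subring_0 is_subring_def intro: subring_add\<close>)
  have "of_int n = of_nat (nat n) \<or> of_int n = 0 - of_nat (nat (- n))" by (cases "n \<ge> 0") simp_all
  moreover have "0 - of_nat (nat (- n)) \<in> C" using C nat subring_0 unfolding is_subring_def by blast
  ultimately show "p \<in> C" using nat p by metis
qed

(* An element of P[M] given by a P-valued coefficient function G supported in a finite T \<subseteq> M *)
definition pm_poly :: "'a::ring_1 set \<Rightarrow> 'a set \<Rightarrow> ('a \<Rightarrow> 'a) \<Rightarrow> bool" where
  "pm_poly M T G \<longleftrightarrow> finite T \<and> T \<subseteq> M \<and> (\<forall>x. G x \<in> prime_subring) \<and> (\<forall>x. x \<notin> T \<longrightarrow> G x = 0)"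

definition pm_eval :: "'a set \<Rightarrow> ('a \<Rightarrow> 'a) \<Rightarrow> 'a::ring_1" where
  "pm_eval T G = (\<Sum>m\<in>T. G m * m)"

lemma pm_poly_lincomb:
  "pm_poly M T1 A \<Longrightarrow> pm_poly M T2 B \<Longrightarrow> p \<in> prime_subring \<Longrightarrow> q \<in> prime_subring
    \<Longrightarrow> pm_poly M (T1 \<union> T2) (\<lambda>x. p * A x - q * B x)"
  unfolding pm_poly_def by (auto intro!: prime_subring_diff prime_subring_mult)

lemma pm_poly_scale: "pm_poly M T A \<Longrightarrow> p \<in> prime_subring \<Longrightarrow> pm_poly M T (\<lambda>x. p * A x)"
  unfolding pm_poly_def by (auto intro!: prime_subring_mult)

lemma pm_eval_image: "pm_poly M T G \<Longrightarrow> pm_eval T G \<in> monoid_ring_image prime_subring M"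
  unfolding pm_poly_def pm_eval_def monoid_ring_image_def
  by (intro CollectI exI[of _ T] exI[of _ G]) auto

lemma pm_eval_extend: "pm_poly M T G \<Longrightarrow> finite U \<Longrightarrow> T \<subseteq> U \<Longrightarrow> pm_eval T G = (\<Sum>x\<in>U. G x * x)"
  unfolding pm_eval_def pm_poly_def by (rule sum.mono_neutral_left) auto

(* coefficients of the product f u g in P[M], where f, g are given by (T1, A), (T2, B) *)
definition twisted_prod :: "'a set \<Rightarrow> ('a \<Rightarrow> 'a) \<Rightarrow> 'a \<Rightarrow> 'a set \<Rightarrow> ('a \<Rightarrow> 'a) \<Rightarrow> 'a \<Rightarrow> 'a::ring_1" where
  "twisted_prod T1 A u T2 B x = (\<Sum>p\<in>T1 \<times> T2. if fst p * u * snd p = x then A (fst p) * B (snd p) else 0)"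

lemma twisted_prod_poly:
  assumes M: "is_submonoid M" and A: "pm_poly M T1 A" and B: "pm_poly M T2 B" and u: "u \<in> M"
  shows "pm_poly M ((\<lambda>p. fst p * u * snd p) ` (T1 \<times> T2)) (twisted_prod T1 A u T2 B)"
  unfolding pm_poly_def
proof (intro conjI allI impI)
  have fin: "finite T1" "finite T2" and sub: "T1 \<subseteq> M" "T2 \<subseteq> M"
    and coeff: "\<And>x. A x \<in> prime_subring" "\<And>x. B x \<in> prime_subring"
    using A B unfolding pm_poly_def by auto
  show "finite ((\<lambda>p. fst p * u * snd p) ` (T1 \<times> T2))" using fin by simp
  have mult_M: "\<And>x y. x \<in> M \<Longrightarrow> y \<in> M \<Longrightarrow> x * y \<in> M" using M unfolding is_submonoid_def by blast
  show "(\<lambda>p. fst p * u * snd p) ` (T1 \<times> T2) \<subseteq> M" using sub u by (auto intro!: mult_M)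
  show "twisted_prod T1 A u T2 B x \<in> prime_subring" for x
    unfolding twisted_prod_def using fin by (intro prime_subring_sum) (auto intro: prime_subring_mult coeff)
  show "twisted_prod T1 A u T2 B x = 0" if "x \<notin> (\<lambda>p. fst p * u * snd p) ` (T1 \<times> T2)" for x
    unfolding twisted_prod_def using that by (intro sum.neutral ballI) (auto intro: rev_image_eqI)
qed

lemma twisted_prod_eval:
  assumes A: "pm_poly M T1 A" and B: "pm_poly M T2 B" and U: "finite U"
    and sub: "(\<lambda>p. fst p * u * snd p) ` (T1 \<times> T2) \<subseteq> U"
  shows "(\<Sum>x\<in>U. twisted_prod T1 A u T2 B x * x) = pm_eval T1 A * u * pm_eval T2 B"
proof -
  have fin: "finite T1" "finite T2" and coeffB: "\<And>x. B x \<in> prime_subring"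
    using A B unfolding pm_poly_def by auto
  have "(\<Sum>x\<in>U. twisted_prod T1 A u T2 B x * x)
      = (\<Sum>p\<in>T1 \<times> T2. \<Sum>x\<in>U. if fst p * u * snd p = x then A (fst p) * B (snd p) * x else 0)"
    unfolding twisted_prod_def sum_distrib_right by (subst sum.swap) (intro sum.cong refl, simp)
  also have "\<dots> = (\<Sum>p\<in>T1 \<times> T2. A (fst p) * B (snd p) * (fst p * u * snd p))"
    using U sub by (intro sum.cong refl) (auto simp: sum.delta')
  also have "\<dots> = (\<Sum>m\<in>T1. \<Sum>n\<in>T2. A m * B n * (m * u * n))"
    by (simp add: sum.cartesian_product split_def)
  also have "\<dots> = (\<Sum>m\<in>T1. \<Sum>n\<in>T2. A m * m * u * (B n * n))"
  proof (intro sum.cong refl)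
    fix m n
    have "A m * B n * (m * u * n) = A m * (B n * (m * u)) * n" by (simp add: mult.assoc)
    also have "B n * (m * u) = m * u * B n" by (rule prime_subring_commute[OF coeffB])
    finally show "A m * B n * (m * u * n) = A m * m * u * (B n * n)" by (simp add: mult.assoc)
  qed
  also have "\<dots> = pm_eval T1 A * u * pm_eval T2 B"
    unfolding pm_eval_def by (simp add: sum_distrib_left sum_distrib_right, rule sum.swap)
  finally show ?thesis .
qed

definition leading_term :: "('a \<Rightarrow> 'a \<Rightarrow> bool) \<Rightarrow> 'a set \<Rightarrow> ('a \<Rightarrow> 'a::ring_1) \<Rightarrow> 'a \<Rightarrow> bool" where
  "leading_term lt T G a \<longleftrightarrow> a \<in> T \<and> G a \<noteq> 0 \<and> (\<forall>x\<in>T. G x \<noteq> 0 \<longrightarrow> x = a \<or> lt x a)"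

locale ordered_submonoid =
  fixes M :: "'a::ring_1 set" and lt :: "'a \<Rightarrow> 'a \<Rightarrow> bool"
  assumes submonoid: "is_submonoid M"
    and lt_irrefl: "\<And>x. x \<in> M \<Longrightarrow> \<not> lt x x"
    and lt_trans: "\<And>x y z. x \<in> M \<Longrightarrow> y \<in> M \<Longrightarrow> z \<in> M \<Longrightarrow> lt x y \<Longrightarrow> lt y z \<Longrightarrow> lt x z"
    and lt_total: "\<And>x y. x \<in> M \<Longrightarrow> y \<in> M \<Longrightarrow> x \<noteq> y \<Longrightarrow> lt x y \<or> lt y x"
    and lt_mult_left: "\<And>x y z. x \<in> M \<Longrightarrow> y \<in> M \<Longrightarrow> z \<in> M \<Longrightarrow> lt x y \<Longrightarrow> lt (z * x) (z * y)"
    and lt_mult_right: "\<And>x y z. x \<in> M \<Longrightarrow> y \<in> M \<Longrightarrow> z \<in> M \<Longrightarrow> lt x y \<Longrightarrow> lt (x * z) (y * z)"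
begin

lemma one_mem: "1 \<in> M"
  and mult_mem: "x \<in> M \<Longrightarrow> y \<in> M \<Longrightarrow> x * y \<in> M"
  using submonoid unfolding is_submonoid_def by auto

lemma lt_asym: "x \<in> M \<Longrightarrow> y \<in> M \<Longrightarrow> lt x y \<Longrightarrow> \<not> lt y x"
  using lt_trans lt_irrefl by blast

lemma finite_has_max:
  "finite X \<Longrightarrow> X \<noteq> {} \<Longrightarrow> X \<subseteq> M \<Longrightarrow> \<exists>a\<in>X. \<forall>x\<in>X. x = a \<or> lt x a"
proof (induction X rule: finite_ne_induct)
  case (insert y X)
  then obtain a where a: "a \<in> X" "\<forall>x\<in>X. x = a \<or> lt x a" and y: "y \<in> M" and X: "X \<subseteq> M"
    by auto
  show ?case
  proof (cases "lt a y")
    case True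
    have "lt x y" if x: "x \<in> X" for x
    proof -
      have "x \<in> M" "a \<in> M" using x a(1) X by auto
      then show ?thesis using a(2) x True lt_trans[OF _ _ y, of x a] by auto
    qed
    then show ?thesis by auto
  next
    case False
    then show ?thesis using lt_total[OF y] a X by auto
  qed
qed simp

lemma leading_term_exists:
  assumes "pm_poly M T G" "G x \<noteq> 0" shows "\<exists>a. leading_term lt T G a"
proof -
  have "x \<in> T" "finite T" "T \<subseteq> M" using assms unfolding pm_poly_def by auto
  then have "\<exists>a\<in>{x \<in> T. G x \<noteq> 0}. \<forall>y\<in>{x \<in> T. G x \<noteq> 0}. y = a \<or> lt y a"
    using assms(2) by (intro finite_has_max) auto
  then show ?thesis unfolding leading_term_def by auto
qed

lemma leading_term_unique:
  assumes "pm_poly M T G" "leading_term lt T G a" "leading_term lt T G b"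
  shows "a = b"
proof -
  have "a \<in> T" "b \<in> T" "G a \<noteq> 0" "G b \<noteq> 0" "T \<subseteq> M"
    using assms unfolding leading_term_def pm_poly_def by auto
  then have "a = b \<or> lt a b" "b = a \<or> lt b a" "a \<in> M" "b \<in> M"
    using assms(2,3) unfolding leading_term_def by auto
  then show ?thesis using lt_asym by blast
qed

lemma lt_product_strict:
  assumes m: "m \<in> M" and n: "n \<in> M" and a: "a \<in> M" and b: "b \<in> M" and u: "u \<in> M"
    and ma: "m = a \<or> lt m a" and nb: "n = b \<or> lt n b" and ne: "(m, n) \<noteq> (a, b)"
  shows "lt (m * u * n) (a * u * b)"
proof (cases "m = a")
  case True
  then have "lt n b" using nb ne by auto
  then show ?thesis using lt_mult_left[OF n b mult_mem[OF a u]] True by simp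
next
  case False
  then have "lt (m * u) (a * u)" using ma lt_mult_right[OF m a u] by simp
  then have mn: "lt (m * u * n) (a * u * n)" using lt_mult_right[OF mult_mem[OF m u] mult_mem[OF a u] n] by simp
  show ?thesis
  proof (cases "n = b")
    case False
    then have "lt (a * u * n) (a * u * b)" using nb lt_mult_left[OF n b mult_mem[OF a u]] by simp
    then show ?thesis
      using lt_trans[OF mult_mem[OF mult_mem[OF m u] n] mult_mem[OF mult_mem[OF a u] n]
          mult_mem[OF mult_mem[OF a u] b]] mn by simp
  qed (use mn in simp)
qed

lemma twisted_prod_leading:
  assumes A: "pm_poly M T1 A" and B: "pm_poly M T2 B" and u: "u \<in> M"
    and la: "leading_term lt T1 A a" and lb: "leading_term lt T2 B b"
    and x: "x \<in> M" and not_below: "\<not> lt x (a * u * b)"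
  shows "twisted_prod T1 A u T2 B x = (if x = a * u * b then A a * B b else 0)"
proof -
  have fin: "finite T1" "finite T2" and sub: "T1 \<subseteq> M" "T2 \<subseteq> M"
    using A B unfolding pm_poly_def by auto
  have aT: "a \<in> T1" and bT: "b \<in> T2" using la lb unfolding leading_term_def by auto
  have "twisted_prod T1 A u T2 B x
      = (\<Sum>p\<in>T1 \<times> T2. if p = (a, b) then (if x = a * u * b then A a * B b else 0) else 0)"
    unfolding twisted_prod_def
  proof (rule sum.cong[OF refl])
    fix p assume "p \<in> T1 \<times> T2"
    then obtain m n where p: "p = (m, n)" and mT: "m \<in> T1" and nT: "n \<in> T2" by auto
    show "(if fst p * u * snd p = x then A (fst p) * B (snd p) else 0) =
          (if p = (a, b) then if x = a * u * b then A a * B b else 0 else 0)"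
    proof (cases "p = (a, b) \<or> A m = 0 \<or> B n = 0")
      case False
      then have "m = a \<or> lt m a" "n = b \<or> lt n b"
        using la lb mT nT unfolding leading_term_def by auto
      then have "lt (m * u * n) (a * u * b)"
        using lt_product_strict[of m n a b u] mT nT aT bT sub u False p by auto
      then show ?thesis using not_below False p by auto
    qed (auto simp: p)
  qed
  also have "\<dots> = (if x = a * u * b then A a * B b else 0)"
    using aT bT fin by (simp add: sum.delta)
  finally show ?thesis .
qed

end

(* For c_i \<in> C and elements f_i = (T i, G i) of P[M], the coefficient at x of the
   formal sum \<Sum> c_i f_i in C[M]. *)
definition formal_coeff :: "'i set \<Rightarrow> ('i \<Rightarrow> 'a::ring_1) \<Rightarrow> ('i \<Rightarrow> 'a \<Rightarrow> 'a) \<Rightarrow> 'a \<Rightarrow> 'a" where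
  "formal_coeff I c G x = (\<Sum>i\<in>I. c i * G i x)"

definition linear_relation ::
    "'a::ring_1 set \<Rightarrow> 'a set \<Rightarrow> 'i set \<Rightarrow> ('i \<Rightarrow> 'a) \<Rightarrow> ('i \<Rightarrow> 'a set) \<Rightarrow> ('i \<Rightarrow> 'a \<Rightarrow> 'a) \<Rightarrow> bool" where
  "linear_relation M C I c T G \<longleftrightarrow>
     finite I \<and> (\<forall>i\<in>I. c i \<in> C \<and> pm_poly M (T i) (G i)) \<and> (\<Sum>i\<in>I. c i * pm_eval (T i) (G i)) = 0"

definition shorter_relations_trivial :: "'a::ring_1 set \<Rightarrow> 'a set \<Rightarrow> 'i set \<Rightarrow> bool" where
  "shorter_relations_trivial M C I \<longleftrightarrow>
     (\<forall>(J::'i set) d S F x. linear_relation M C J d S F \<and> card J < card I \<longrightarrow> formal_coeff J d F x = 0)"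

definition minimal_nontrivial_relation ::
    "'a::ring_1 set \<Rightarrow> 'a set \<Rightarrow> 'i set \<Rightarrow> ('i \<Rightarrow> 'a) \<Rightarrow> ('i \<Rightarrow> 'a set) \<Rightarrow> ('i \<Rightarrow> 'a \<Rightarrow> 'a) \<Rightarrow> bool" where
  "minimal_nontrivial_relation M C I c T G \<longleftrightarrow>
     linear_relation M C I c T G \<and> shorter_relations_trivial M C I \<and> (\<exists>x. formal_coeff I c G x \<noteq> 0)"

lemma shorter_relations_trivial_remove:
  assumes "shorter_relations_trivial M C I" "finite I" "j \<in> I" "linear_relation M C (I - {j}) d S F"
  shows "formal_coeff (I - {j}) d F x = 0"
  using assms card_Diff1_less[OF assms(2,3)] unfolding shorter_relations_trivial_def by blast

lemma eval_as_formal: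
  assumes "finite I" "\<And>i. i \<in> I \<Longrightarrow> pm_poly M (T i) (G i)" "finite U" "\<And>i. i \<in> I \<Longrightarrow> T i \<subseteq> U"
  shows "(\<Sum>i\<in>I. c i * pm_eval (T i) (G i)) = (\<Sum>x\<in>U. formal_coeff I c G x * x)"
proof -
  have "(\<Sum>i\<in>I. c i * pm_eval (T i) (G i)) = (\<Sum>i\<in>I. \<Sum>x\<in>U. c i * G i x * x)"
    using pm_eval_extend[OF assms(2) assms(3) assms(4)]
    by (intro sum.cong refl) (simp add: sum_distrib_left mult.assoc)
  also have "\<dots> = (\<Sum>x\<in>U. \<Sum>i\<in>I. c i * G i x * x)" by (rule sum.swap)
  also have "\<dots> = (\<Sum>x\<in>U. formal_coeff I c G x * x)"
    unfolding formal_coeff_def by (simp add: sum_distrib_right)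
  finally show ?thesis .
qed

lemma formal_coeff_in_subring:
  assumes "is_subring C" "linear_relation M C I c T G" shows "formal_coeff I c G x \<in> C"
  using assms(2) prime_subring_subset[OF assms(1)] unfolding linear_relation_def formal_coeff_def pm_poly_def
  by (intro subring_sum[OF assms(1)]) (auto intro!: subring_mult[OF assms(1)])

lemma relation_rescale:
  assumes r: "linear_relation M C I c T G" and fin': "finite I'"
    and c': "\<And>i. i \<in> I' \<Longrightarrow> c' i \<in> C" and G': "\<And>i. i \<in> I' \<Longrightarrow> pm_poly M (T' i) (G' i)"
    and coeff: "\<And>x. formal_coeff I' c' G' x = p * formal_coeff I c G x"
  shows "linear_relation M C I' c' T' G'"
proof -
  define U where "U = (\<Union>i\<in>I. T i) \<union> (\<Union>i\<in>I'. T' i)"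
  have fin: "finite I" and G: "\<And>i. i \<in> I \<Longrightarrow> pm_poly M (T i) (G i)"
    and rel: "(\<Sum>i\<in>I. c i * pm_eval (T i) (G i)) = 0"
    using r unfolding linear_relation_def by auto
  have U: "finite U" unfolding U_def using fin fin' G G' by (auto simp: pm_poly_def)
  have "(\<Sum>i\<in>I'. c' i * pm_eval (T' i) (G' i)) = (\<Sum>x\<in>U. formal_coeff I' c' G' x * x)"
    by (rule eval_as_formal[OF fin' G' U]) (auto simp: U_def)
  also have "\<dots> = p * (\<Sum>x\<in>U. formal_coeff I c G x * x)"
    by (simp add: coeff sum_distrib_left mult.assoc)
  also have "(\<Sum>x\<in>U. formal_coeff I c G x * x) = (\<Sum>i\<in>I. c i * pm_eval (T i) (G i))"
    by (rule eval_as_formal[OF fin G U, symmetric]) (auto simp: U_def)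
  finally show ?thesis using rel fin' c' G' unfolding linear_relation_def by simp
qed

locale monoid_ring_setting = ordered_submonoid M lt
  for M :: "'a::ring_1 set" and lt :: "'a \<Rightarrow> 'a \<Rightarrow> bool" +
  fixes C :: "'a set"
  assumes subring: "is_subring C"
    and pm_injective: "monoid_ring_injective prime_subring M"
    and no_zero_divisors:
      "\<And>c f. c \<in> C \<Longrightarrow> f \<in> monoid_ring_image prime_subring M \<Longrightarrow> c * f = 0 \<Longrightarrow> c = 0 \<or> f = 0"
    and commute: "\<And>m c. m \<in> M \<Longrightarrow> c \<in> C \<Longrightarrow> m * c = c * m"
    and rigid: "twist_rigid M"
begin

lemma prime_subring_image: "p \<in> prime_subring \<Longrightarrow> p \<in> monoid_ring_image prime_subring M"
  unfolding monoid_ring_image_def by (intro CollectI exI[of _ "{1}"] exI[of _ "\<lambda>_. p"]) (simp add: one_mem)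

lemma prime_no_zero_divisors: "c \<in> C \<Longrightarrow> p \<in> prime_subring \<Longrightarrow> p * c = 0 \<Longrightarrow> c = 0 \<or> p = 0"
  using no_zero_divisors[of c p] prime_subring_image prime_subring_commute by metis

lemma prime_subring_domain:
  "(p::'a) \<in> prime_subring \<Longrightarrow> q \<in> prime_subring \<Longrightarrow> p \<noteq> 0 \<Longrightarrow> q \<noteq> 0 \<Longrightarrow> p * q \<noteq> 0"
  using no_zero_divisors[of p q] prime_subring_image prime_subring_subset[OF subring] by blast

lemma image_commute:
  assumes f: "f \<in> monoid_ring_image prime_subring M" and c: "c \<in> C"
  shows "f * c = c * f"
proof -
  obtain S d where S: "S \<subseteq> M" "d ` S \<subseteq> prime_subring" and f_eq: "f = (\<Sum>m\<in>S. d m * m)"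
    using f unfolding monoid_ring_image_def by auto
  have "d m * m * c = c * (d m * m)" if "m \<in> S" for m
    using commute[of m c] prime_subring_commute[of "d m" c] that S c
    by (simp add: mult.assoc subset_eq) (simp flip: mult.assoc)
  then show ?thesis by (simp add: f_eq sum_distrib_left sum_distrib_right)
qed

(* in a minimal nontrivial relation no f_j vanishes, since it could be dropped *)
lemma minimal_relation_components_nonzero:
  assumes r: "minimal_nontrivial_relation M C I c T G" and j: "j \<in> I"
  shows "\<exists>x. G j x \<noteq> 0"
proof (rule ccontr)
  assume "\<not> ?thesis"
  then have zero: "\<And>x. G j x = 0" by auto
  obtain x0 where x0: "formal_coeff I c G x0 \<noteq> 0" and short: "shorter_relations_trivial M C I"
    and fin: "finite I" and cG: "\<forall>i\<in>I. c i \<in> C \<and> pm_poly M (T i) (G i)"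
    and rel: "(\<Sum>i\<in>I. c i * pm_eval (T i) (G i)) = 0"
    using r unfolding minimal_nontrivial_relation_def linear_relation_def by blast
  have "pm_eval (T j) (G j) = 0" unfolding pm_eval_def by (simp add: zero)
  then have "(\<Sum>i\<in>I - {j}. c i * pm_eval (T i) (G i)) = 0"
    using rel sum.remove[OF fin j, of "\<lambda>i. c i * pm_eval (T i) (G i)"] by simp
  then have "linear_relation M C (I - {j}) c T G" using fin cG unfolding linear_relation_def by auto
  then have "formal_coeff (I - {j}) c G x0 = 0" by (rule shorter_relations_trivial_remove[OF short fin j])
  moreover have "formal_coeff I c G x0 = c j * G j x0 + formal_coeff (I - {j}) c G x0"
    unfolding formal_coeff_def using fin j by (rule sum.remove)
  ultimately show False using x0 zero by simp
qed

(* in a minimal nontrivial relation the c_i are linearly independent over P: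
   a dependence \<Sum> p_i c_i = 0 with p_j \<noteq> 0 would give the shorter relation
   \<Sum>_{i \<noteq> j} c_i (p_j f_i - p_i f_j) = 0 whose formal sum is p_j times the old one *)
lemma minimal_relation_independent:
  assumes r: "minimal_nontrivial_relation M C I c T G"
    and p: "\<And>i. i \<in> I \<Longrightarrow> p i \<in> prime_subring" and dep: "(\<Sum>i\<in>I. p i * c i) = 0" and j: "j \<in> I"
  shows "p j = 0"
proof (rule ccontr)
  assume pj: "p j \<noteq> 0"
  obtain x0 where x0: "formal_coeff I c G x0 \<noteq> 0" and short: "shorter_relations_trivial M C I"
    and rel: "linear_relation M C I c T G"
    using r unfolding minimal_nontrivial_relation_def by blast
  have fin: "finite I" and c: "\<And>i. i \<in> I \<Longrightarrow> c i \<in> C" and G: "\<And>i. i \<in> I \<Longrightarrow> pm_poly M (T i) (G i)"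
    using rel unfolding linear_relation_def by auto
  define G' where "G' = (\<lambda>i x. p j * G i x - p i * G j x)"
  define T' where "T' = (\<lambda>i. T i \<union> T j)"
  have G': "pm_poly M (T' i) (G' i)" if "i \<in> I" for i
    unfolding G'_def T'_def using pm_poly_lincomb[OF G[OF that] G[OF j] p[OF j] p[OF that]] by simp
  have coeff: "formal_coeff (I - {j}) c G' x = p j * formal_coeff I c G x" for x
  proof -
    have "formal_coeff I c G' x = c j * G' j x + formal_coeff (I - {j}) c G' x"
      unfolding formal_coeff_def using fin j by (rule sum.remove)
    then have "formal_coeff (I - {j}) c G' x = formal_coeff I c G' x" by (simp add: G'_def)
    also have "\<dots> = (\<Sum>i\<in>I. p j * (c i * G i x) - p i * c i * G j x)"
      unfolding formal_coeff_def
    proof (rule sum.cong[OF refl])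
      fix i assume i: "i \<in> I"
      have "c i * p j = p j * c i" "c i * p i = p i * c i"
        using prime_subring_commute[OF p[OF j]] prime_subring_commute[OF p[OF i]] by simp_all
      then show "c i * G' i x = p j * (c i * G i x) - p i * c i * G j x"
        unfolding G'_def by (simp add: right_diff_distrib flip: mult.assoc)
    qed
    also have "\<dots> = p j * formal_coeff I c G x - (\<Sum>i\<in>I. p i * c i) * G j x"
      unfolding formal_coeff_def by (simp add: sum_subtractf sum_distrib_left sum_distrib_right)
    finally show ?thesis using dep by simp
  qed
  have "linear_relation M C (I - {j}) c T' G'"
    by (rule relation_rescale[OF rel _ _ _ coeff]) (use fin c G' in auto)
  then have "formal_coeff (I - {j}) c G' x0 = 0" by (rule shorter_relations_trivial_remove[OF short fin j])
  then show False
    using coeff prime_no_zero_divisors[OF formal_coeff_in_subring[OF subring rel] p[OF j]] x0 pj by simp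
qed

(* For u \<in> M: the relation \<Sum> c_k f_k = 0 multiplied by u f_{i0} on the right and by
   f_{i0} u on the left gives \<Sum>_{k \<noteq> i0} c_k (f_k u f_{i0} - f_{i0} u f_k) = 0, using that
   C commutes with M and with P[M]. *)
lemma commutator_relation:
  assumes r: "linear_relation M C I c T G" and i0: "i0 \<in> I" and u: "u \<in> M"
  defines "S \<equiv> \<lambda>k. (\<lambda>p. fst p * u * snd p) ` (T k \<times> T i0) \<union> (\<lambda>p. fst p * u * snd p) ` (T i0 \<times> T k)"
    and "F \<equiv> \<lambda>k y. twisted_prod (T k) (G k) u (T i0) (G i0) y - twisted_prod (T i0) (G i0) u (T k) (G k) y"
  shows "linear_relation M C (I - {i0}) c S F"
proof -
  have fin: "finite I" and c: "\<And>i. i \<in> I \<Longrightarrow> c i \<in> C" and G: "\<And>i. i \<in> I \<Longrightarrow> pm_poly M (T i) (G i)"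
    and rel: "(\<Sum>i\<in>I. c i * pm_eval (T i) (G i)) = 0"
    using r unfolding linear_relation_def by auto
  define f where "f = (\<lambda>k. pm_eval (T k) (G k))"
  have F: "pm_poly M (S k) (F k)" if k: "k \<in> I" for k
    using pm_poly_lincomb[OF twisted_prod_poly[OF submonoid G[OF k] G[OF i0] u]
        twisted_prod_poly[OF submonoid G[OF i0] G[OF k] u] prime_subring_1 prime_subring_1]
    unfolding S_def F_def by simp
  have eval_F: "pm_eval (S k) (F k) = f k * u * f i0 - f i0 * u * f k" if k: "k \<in> I" for k
  proof -
    have S: "finite (S k)" using F[OF k] unfolding pm_poly_def by simp
    have "pm_eval (S k) (F k) = (\<Sum>y\<in>S k. twisted_prod (T k) (G k) u (T i0) (G i0) y * y)
        - (\<Sum>y\<in>S k. twisted_prod (T i0) (G i0) u (T k) (G k) y * y)"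
      unfolding pm_eval_def F_def by (simp add: left_diff_distrib sum_subtractf)
    also have "\<dots> = f k * u * f i0 - f i0 * u * f k"
      unfolding f_def using S
      by (simp add: twisted_prod_eval[OF G[OF k] G[OF i0]] twisted_prod_eval[OF G[OF i0] G[OF k]] S_def)
    finally show ?thesis .
  qed
  have comm_k: "c k * (f i0 * u * f k) = f i0 * u * (c k * f k)" if k: "k \<in> I" for k
  proof -
    have "c k * f i0 = f i0 * c k"
      using image_commute[OF pm_eval_image[OF G[OF i0]] c[OF k]] by (simp add: f_def)
    moreover have "c k * u = u * c k" using commute[OF u c[OF k]] by simp
    ultimately show ?thesis by (simp flip: mult.assoc) (simp add: mult.assoc)
  qed
  have "(\<Sum>k\<in>I - {i0}. c k * pm_eval (S k) (F k)) = (\<Sum>k\<in>I. c k * (f k * u * f i0 - f i0 * u * f k))"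
    using eval_F sum.remove[OF fin i0, of "\<lambda>k. c k * (f k * u * f i0 - f i0 * u * f k)"] by simp
  also have "\<dots> = (\<Sum>k\<in>I. c k * f k) * u * f i0 - f i0 * u * (\<Sum>k\<in>I. c k * f k)"
    using comm_k
    by (simp add: right_diff_distrib mult.assoc sum_subtractf sum_distrib_left sum_distrib_right)
  also have "\<dots> = 0" using rel by (simp add: f_def)
  finally show ?thesis using fin c F unfolding linear_relation_def by auto
qed

(* by minimality the commutator relation is formally trivial, and by independence of
   the c_k each f_k u f_{i0} - f_{i0} u f_k vanishes in P[M] *)
lemma minimal_relation_twisted_commute:
  assumes r: "minimal_nontrivial_relation M C I c T G"
    and i0: "i0 \<in> I" and i: "i \<in> I" and ne: "i \<noteq> i0" and u: "u \<in> M"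
  shows "twisted_prod (T i) (G i) u (T i0) (G i0) x = twisted_prod (T i0) (G i0) u (T i) (G i) x"
proof -
  have rel: "linear_relation M C I c T G" and short: "shorter_relations_trivial M C I"
    using r unfolding minimal_nontrivial_relation_def by auto
  have fin: "finite I" and G: "\<And>i. i \<in> I \<Longrightarrow> pm_poly M (T i) (G i)"
    using rel unfolding linear_relation_def by auto
  define F where "F = (\<lambda>k y. twisted_prod (T k) (G k) u (T i0) (G i0) y
      - twisted_prod (T i0) (G i0) u (T k) (G k) y)"
  have trivial: "formal_coeff (I - {i0}) c F x = 0"
    unfolding F_def by (rule shorter_relations_trivial_remove[OF short fin i0 commutator_relation[OF rel i0 u]])
  have F: "F k x \<in> prime_subring" if "k \<in> I" for k
    using twisted_prod_poly[OF submonoid G[OF that] G[OF i0] u] twisted_prod_poly[OF submonoid G[OF i0] G[OF that] u]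
    unfolding F_def pm_poly_def by (blast intro: prime_subring_diff)
  define p where "p = (\<lambda>k. if k = i0 then 0 else F k x)"
  have "(\<Sum>k\<in>I. p k * c k) = (\<Sum>k\<in>I - {i0}. p k * c k)"
    using sum.remove[OF fin i0, of "\<lambda>k. p k * c k"] by (simp add: p_def)
  also have "\<dots> = formal_coeff (I - {i0}) c F x"
    unfolding formal_coeff_def p_def using F prime_subring_commute by (intro sum.cong) auto
  finally have "(\<Sum>k\<in>I. p k * c k) = 0" using trivial by simp
  then have "p i = 0"
    by (rule minimal_relation_independent[OF r, rotated]) (use F i in \<open>auto simp: p_def\<close>)
  then show ?thesis using ne by (simp add: p_def F_def)
qed

(* all f_i of a minimal nontrivial relation have the same leading term: comparing the top
   terms b u a and a u b of f_i u f_{i0} = f_{i0} u f_i forces b u a = a u b for all u \<in> M *)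
lemma minimal_relation_common_leading_term:
  assumes r: "minimal_nontrivial_relation M C I c T G" and i0: "i0 \<in> I" and i: "i \<in> I"
    and la: "leading_term lt (T i0) (G i0) a" and lb: "leading_term lt (T i) (G i) b"
  shows "a = b"
proof (cases "i = i0")
  case True
  then show ?thesis
    using leading_term_unique la lb r i0 unfolding minimal_nontrivial_relation_def linear_relation_def by blast
next
  case ne: False
  have G: "\<And>i. i \<in> I \<Longrightarrow> pm_poly M (T i) (G i)"
    using r unfolding minimal_nontrivial_relation_def linear_relation_def by auto
  have a: "a \<in> T i0" "G i0 a \<noteq> 0" and b: "b \<in> T i" "G i b \<noteq> 0"
    using la lb unfolding leading_term_def by auto
  have aM: "a \<in> M" and bM: "b \<in> M" and aP: "G i0 a \<in> prime_subring" and bP: "G i b \<in> prime_subring"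
    using G[OF i0] G[OF i] a b unfolding pm_poly_def by auto
  have ab: "G i0 a * G i b \<noteq> 0" and ba: "G i b * G i0 a \<noteq> 0"
    using prime_subring_domain aP bP a b by auto
  have "b * u * a = a * u * b" if u: "u \<in> M" for u
  proof (rule ccontr)
    assume neq: "b * u * a \<noteq> a * u * b"
    have buaM: "b * u * a \<in> M" and aubM: "a * u * b \<in> M" using mult_mem aM bM u by auto
    note comm = minimal_relation_twisted_commute[OF r i0 i ne u]
    note top_ba = twisted_prod_leading[OF G[OF i] G[OF i0] u lb la]
    note top_ab = twisted_prod_leading[OF G[OF i0] G[OF i] u la lb]
    from lt_total[OF buaM aubM neq] show False
    proof
      assume "lt (b * u * a) (a * u * b)"
      then have "\<not> lt (a * u * b) (b * u * a)" using lt_asym buaM aubM by blast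
      then show False using comm[of "a * u * b"] top_ba[OF aubM] top_ab[OF aubM] lt_irrefl[OF aubM] neq ab
        by auto
    next
      assume "lt (a * u * b) (b * u * a)"
      then have "\<not> lt (b * u * a) (a * u * b)" using lt_asym buaM aubM by blast
      then show False using comm[of "b * u * a"] top_ba[OF buaM] top_ab[OF buaM] lt_irrefl[OF buaM] neq ba
        by auto
    qed
  qed
  then show ?thesis using rigid aM bM unfolding twist_rigid_def by blast
qed

(* Gaussian elimination step: replacing f_{i1} by \<alpha>0 f_{i1} - \<alpha>1 f_{i0}, the other f_i by
   \<alpha>0 f_i, and c_{i0} by \<alpha>0 c_{i0} + \<alpha>1 c_{i1} yields a relation whose formal sum is \<alpha>0
   times the old one (\<alpha>0, \<alpha>1 \<in> P) *)
lemma relation_eliminate: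
  assumes r: "linear_relation M C I c T G" and i0: "i0 \<in> I" and i1: "i1 \<in> I" and ne: "i1 \<noteq> i0"
    and \<alpha>0: "\<alpha>0 \<in> prime_subring" and \<alpha>1: "\<alpha>1 \<in> prime_subring"
  obtains c' T' G' where "linear_relation M C I c' T' G'" "T' i0 = T i0" "G' i0 = G i0"
    "\<And>x. G' i1 x = \<alpha>0 * G i1 x - \<alpha>1 * G i0 x"
    "\<And>x. formal_coeff I c' G' x = \<alpha>0 * formal_coeff I c G x"
proof -
  have fin: "finite I" and c: "\<And>i. i \<in> I \<Longrightarrow> c i \<in> C" and G: "\<And>i. i \<in> I \<Longrightarrow> pm_poly M (T i) (G i)"
    using r unfolding linear_relation_def by auto
  define c' where "c' = (\<lambda>i. if i = i0 then \<alpha>0 * c i0 + \<alpha>1 * c i1 else c i)"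
  define G' where "G' = (\<lambda>i. if i = i0 then G i0
      else if i = i1 then (\<lambda>x. \<alpha>0 * G i1 x - \<alpha>1 * G i0 x) else (\<lambda>x. \<alpha>0 * G i x))"
  define T' where "T' = (\<lambda>i. if i = i1 then T i1 \<union> T i0 else T i)"
  have kept: "T' i0 = T i0" "G' i0 = G i0" and eliminated: "G' i1 x = \<alpha>0 * G i1 x - \<alpha>1 * G i0 x" for x
    using ne by (simp_all add: T'_def G'_def)
  have G': "pm_poly M (T' i) (G' i)" if "i \<in> I" for i
    using G[OF that] pm_poly_lincomb[OF G[OF i1] G[OF i0] \<alpha>0 \<alpha>1] pm_poly_scale[OF G[OF that] \<alpha>0] G[OF i0] ne
    by (simp add: T'_def G'_def)
  have c': "c' i \<in> C" if "i \<in> I" for i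
    using c[OF that] c[OF i0] c[OF i1] prime_subring_subset[OF subring] \<alpha>0 \<alpha>1
    unfolding c'_def by (auto intro!: subring_add[OF subring] subring_mult[OF subring])
  have coeff: "formal_coeff I c' G' x = \<alpha>0 * formal_coeff I c G x" for x
  proof -
    define e where "e = \<alpha>1 * c i1 * G i0 x"
    have summand:
      "c' i * G' i x = \<alpha>0 * (c i * G i x) + ((if i = i0 then e else 0) + (if i = i1 then - e else 0))"
      for i
    proof -
      consider "i = i0" | "i = i1" | "i \<noteq> i0 \<and> i \<noteq> i1" by blast
      then show ?thesis
      proof cases
        case 1 then show ?thesis using ne by (simp add: c'_def G'_def e_def distrib_right mult.assoc)
      next
        case 2
        have "c i1 * \<alpha>0 = \<alpha>0 * c i1" "c i1 * \<alpha>1 = \<alpha>1 * c i1"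
          using prime_subring_commute[OF \<alpha>0] prime_subring_commute[OF \<alpha>1] by simp_all
        then have "c i1 * (\<alpha>0 * G i1 x - \<alpha>1 * G i0 x) = \<alpha>0 * (c i1 * G i1 x) - e"
          by (simp add: right_diff_distrib e_def flip: mult.assoc)
        then show ?thesis using 2 ne by (simp add: c'_def G'_def)
      next
        case 3
        have "c i * \<alpha>0 = \<alpha>0 * c i" using prime_subring_commute[OF \<alpha>0] by simp
        then show ?thesis using 3 by (simp add: c'_def G'_def flip: mult.assoc)
      qed
    qed
    have "formal_coeff I c' G' x = (\<Sum>i\<in>I. \<alpha>0 * (c i * G i x))
        + ((\<Sum>i\<in>I. if i = i0 then e else 0) + (\<Sum>i\<in>I. if i = i1 then - e else 0))"
      unfolding formal_coeff_def summand by (simp add: sum.distrib)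
    also have "\<dots> = \<alpha>0 * formal_coeff I c G x"
      using fin i0 i1 unfolding formal_coeff_def by (simp add: sum.delta sum_distrib_left)
    finally show ?thesis .
  qed
  show thesis by (rule that[OF relation_rescale[OF r fin c' G' coeff] kept eliminated coeff])
qed

(* a one-term relation c f = 0 is trivial: c = 0, or f = 0 in R and hence in P[M] *)
lemma singleton_relation_trivial:
  assumes r: "linear_relation M C {j} c T G" shows "formal_coeff {j} c G x = 0"
proof -
  have c: "c j \<in> C" and G: "pm_poly M (T j) (G j)" and rel: "c j * pm_eval (T j) (G j) = 0"
    using r unfolding linear_relation_def by auto
  have "G j x = 0" if "pm_eval (T j) (G j) = 0"
    using pm_injective that G unfolding monoid_ring_injective_def pm_eval_def pm_poly_def
    by (metis image_subsetI)
  then show ?thesis using no_zero_divisors[OF c pm_eval_image[OF G] rel] unfolding formal_coeff_def by auto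
qed

lemma no_minimal_nontrivial_relation: "\<not> minimal_nontrivial_relation M C I c T G"
proof
  assume r: "minimal_nontrivial_relation M C I c T G"
  obtain x0 where x0: "formal_coeff I c G x0 \<noteq> 0" and rel: "linear_relation M C I c T G"
    and short: "shorter_relations_trivial M C I"
    using r unfolding minimal_nontrivial_relation_def by blast
  have fin: "finite I" and G: "\<And>i. i \<in> I \<Longrightarrow> pm_poly M (T i) (G i)"
    using rel unfolding linear_relation_def by auto
  consider "I = {}" | j where "I = {j}" | i0 i1 where "i0 \<in> I" "i1 \<in> I" "i1 \<noteq> i0" by blast
  then show False
  proof cases
    case 1 then show False using x0 unfolding formal_coeff_def by simp
  next
    case 2 then show False using x0 singleton_relation_trivial[of j c T G x0] rel by simp
  next
    case 3
    note i0 = \<open>i0 \<in> I\<close> and i1 = \<open>i1 \<in> I\<close> and ne = \<open>i1 \<noteq> i0\<close>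
    obtain y where "G i0 y \<noteq> 0" using minimal_relation_components_nonzero[OF r i0] by blast
    then obtain a where la: "leading_term lt (T i0) (G i0) a" using leading_term_exists[OF G[OF i0]] by blast
    define \<alpha>0 \<alpha>1 where "\<alpha>0 = G i0 a" and "\<alpha>1 = G i1 a"
    have \<alpha>: "\<alpha>0 \<in> prime_subring" "\<alpha>1 \<in> prime_subring" and "\<alpha>0 \<noteq> 0"
      using G[OF i0] G[OF i1] la unfolding pm_poly_def leading_term_def \<alpha>0_def \<alpha>1_def by auto
    obtain c' T' G' where rel': "linear_relation M C I c' T' G'" and kept: "T' i0 = T i0" "G' i0 = G i0"
      and eliminated: "G' i1 a = \<alpha>0 * \<alpha>1 - \<alpha>1 * \<alpha>0"
      and coeff: "\<And>x. formal_coeff I c' G' x = \<alpha>0 * formal_coeff I c G x"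
      using relation_eliminate[OF rel i0 i1 ne \<alpha>] unfolding \<alpha>0_def \<alpha>1_def by metis
    have "formal_coeff I c' G' x0 \<noteq> 0"
      using coeff prime_no_zero_divisors[OF formal_coeff_in_subring[OF subring rel] \<alpha>(1)] x0 \<open>\<alpha>0 \<noteq> 0\<close>
      by auto
    then have r': "minimal_nontrivial_relation M C I c' T' G'"
      using rel' short unfolding minimal_nontrivial_relation_def by blast
    obtain y' where "G' i1 y' \<noteq> 0" using minimal_relation_components_nonzero[OF r' i1] by blast
    moreover have "pm_poly M (T' i1) (G' i1)" using rel' i1 unfolding linear_relation_def by blast
    ultimately obtain b where lb: "leading_term lt (T' i1) (G' i1) b" using leading_term_exists by blast
    have "a = b" using minimal_relation_common_leading_term[OF r' i0 i1 _ lb] la kept by simp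
    then have "G' i1 a \<noteq> 0" using lb unfolding leading_term_def by simp
    then show False using eliminated prime_subring_commute[OF \<alpha>(1)] by simp
  qed
qed

lemma linear_relation_formally_trivial:
  "linear_relation M C I c T G \<Longrightarrow> formal_coeff I c G x = 0"
proof (induction "card I" arbitrary: I c T G x rule: less_induct)
  case less
  then have "shorter_relations_trivial M C I" unfolding shorter_relations_trivial_def by blast
  then show ?case using no_minimal_nontrivial_relation less.prems
    unfolding minimal_nontrivial_relation_def by blast
qed

theorem monoid_ring_injective: "monoid_ring_injective C M"
  unfolding monoid_ring_injective_def
proof (intro allI impI ballI)
  fix S c m
  assume S: "finite S" "S \<subseteq> M" "c ` S \<subseteq> C" and sum_zero: "(\<Sum>m\<in>S. c m * m) = 0" and m: "m \<in> S"
  define G :: "'a \<Rightarrow> 'a \<Rightarrow> 'a" where "G = (\<lambda>i x. if x = i then 1 else 0)"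
  have "linear_relation M C S c (\<lambda>i. {i}) G"
    using S sum_zero unfolding linear_relation_def pm_poly_def pm_eval_def G_def by auto
  then have "formal_coeff S c G m = 0" by (rule linear_relation_formally_trivial)
  moreover have "formal_coeff S c G m = (\<Sum>i\<in>S. if i = m then c i else 0)"
    unfolding formal_coeff_def G_def by (rule sum.cong) auto
  ultimately show "c m = 0" using S(1) m by (simp add: sum.delta')
qed

end

theorem lemma2p1:
  fixes M C :: "'a::ring_1 set"
    and H :: "'h monoid" and \<phi> :: "'a \<Rightarrow> 'h"
  assumes "is_submonoid M" and "M \<subseteq> units_of_ring"
    and "is_subring C"
    and "monoid_ring_injective prime_subring M"
    and "\<forall>c\<in>C. \<forall>f\<in>monoid_ring_image prime_subring M. c * f = 0 \<longrightarrow> c = 0 \<or> f = 0"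
    and "\<forall>m\<in>M. \<forall>c\<in>C. m * c = c * m"
    and "orderable_monoid M"
    and "group H" and "monoid_embedding M H \<phi>"
    and "trivial_center H (generate H (\<phi> ` M))"
  shows "monoid_ring_injective C M"
proof -
  obtain lt :: "'a \<Rightarrow> 'a \<Rightarrow> bool" where order:
    "\<forall>x\<in>M. \<not> lt x x" "\<forall>x\<in>M. \<forall>y\<in>M. \<forall>z\<in>M. lt x y \<longrightarrow> lt y z \<longrightarrow> lt x z"
    "\<forall>x\<in>M. \<forall>y\<in>M. x \<noteq> y \<longrightarrow> lt x y \<or> lt y x"
    "\<forall>x\<in>M. \<forall>y\<in>M. \<forall>z\<in>M. lt x y \<longrightarrow> lt (z * x) (z * y) \<and> lt (x * z) (y * z)"
    using \<open>orderable_monoid M\<close> unfolding orderable_monoid_def by blast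
  have "twist_rigid M" using twist_rigid_if_embedded assms(8-10,1) .
  then interpret monoid_ring_setting M lt C
    using assms order by unfold_locales blast+
  show ?thesis by (rule monoid_ring_injective)
qed

end
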